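(* Let $F:(0,\infty)\to(0,\infty)$ be strictly decreasing and continuous with $\int_1^\infty F(x)\,dx<\infty$. Let $0<b<B$ and let $x_{-1}>x_{-2}>\cdots$ be reals with $x_{-1}<0$ and $b\le x_{-i}-x_{-i-1}\le B$ for all $i\ge1$. Let $x_0>x_{-1}$ be given. Then there exist reals $x_0<x_1<x_2<\cdots$ such that every particle $x_i$, $i\ge0$, is in equilibrium in the configuration $(x_n)_{n\in\mathbb Z}$, and moreover $$\min(b,\,x_0-x_{-1})\le x_{i+1}-x_i\le \max(B,\,x_0-x_{-1})\quad\text{for all } i\ge0.$$
   Context: For a strictly increasing sequence $(x_n)_{n\in\mathbb Z}$ of particle positions with force law $F$ (particles at distance $d$ repel with force $F(d)$), the particle at $x_n$ is in equilibrium if $\sum_{m<n}F(x_n-x_m)$ and $\sum_{m>n}F(x_m-x_n)$ are both finite and equal. *)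

theory Defs
  imports "HOL-Analysis.Analysis"
begin

definition in_equilibrium :: "(real \<Rightarrow> real) \<Rightarrow> (int \<Rightarrow> real) \<Rightarrow> int \<Rightarrow> bool" where
  "in_equilibrium F x n \<longleftrightarrow>
     (\<lambda>m. F (x n - x m)) summable_on {..<n} \<and>
     (\<lambda>m. F (x m - x n)) summable_on {n<..} \<and>
     (\<Sum>\<^sub>\<infinity>m\<in>{..<n}. F (x n - x m)) = (\<Sum>\<^sub>\<infinity>m\<in>{n<..}. F (x m - x n))"

end

theory Submission
  imports Defs "HOL-Library.Diagonal_Subsequence"
begin

text \<open>Continue F below a small cutoff so that it is positive, strictly decreasing and
  continuous on all of \<real>. The net force then obeys a comparison principle: if y - z is
  largest at particle i, the net force on i in y is at most that in z, strictly so unless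
  y - z is constant. Keep the given particles x_k (k \<le> 0), let particles 1..n move freely
  and continue behind particle n with a uniform tail of spacing d. Perron's method (the
  supremum of all subsolutions) balances particles 1..n, uniquely and monotonically in d.
  Comparing such a configuration with its own shift by one index shows that its smallest
  gap is at least min(b, x_0 - x_{-1}) unless particle 0 is pushed to the left, and its
  largest gap at most max(B, x_0 - x_{-1}) unless particle 0 is pushed to the right. The
  force on particle 0 is monotone in d, so d can be tuned to balance particle 0 as well.
  Letting n \<rightarrow> \<infinity> along a diagonal subsequence, the force sums pass to the limit by
  Tannery's theorem, since all gaps stay above a fixed positive bound.\<close>

lemma suminf_less_suminf:
  fixes f g :: "nat \<Rightarrow> real"
  assumes "summable f" "summable g" "\<And>n. f n \<le> g n" "f k < g k"
  shows "suminf f < suminf g"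
proof -
  have "0 < (\<Sum>n. g n - f n)"
    by (rule suminf_pos2[of _ k]) (use assms in \<open>auto intro: summable_diff\<close>)
  also have "\<dots> = suminf g - suminf f"
    using assms by (intro suminf_diff[symmetric]) auto
  finally show ?thesis by simp
qed

lemma suminf_le_of_initial_eq:
  fixes f g :: "nat \<Rightarrow> real"
  assumes f: "summable f" and g: "summable g" and head: "\<And>j. j < l \<Longrightarrow> f j = g j"
    and tail: "(\<Sum>r. f (r + l)) \<le> g l" and nonneg: "\<And>j. 0 \<le> g j"
  shows "suminf f \<le> suminf g"
proof -
  have "g l \<le> (\<Sum>r. g (r + l))"
    using sum_le_suminf[OF summable_iff_shift[THEN iffD2, OF g], of "{0}"] nonneg by simp
  moreover have "(\<Sum>j<l. f j) = (\<Sum>j<l. g j)" using head by simp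
  ultimately show ?thesis
    using suminf_split_initial_segment[OF f, of l] suminf_split_initial_segment[OF g, of l] tail
    by linarith
qed

lemma diff_ge_of_gaps_ge:
  fixes y :: "int \<Rightarrow> real"
  assumes "i \<le> j" and "\<And>t. i < t \<Longrightarrow> t \<le> j \<Longrightarrow> a \<le> y t - y (t - 1)"
  shows "a * of_int (j - i) \<le> y j - y i"
  using assms
proof (induction j rule: int_ge_induct)
  case (step j)
  have "a \<le> y (j + 1) - y j"
    using step.prems[of "j + 1"] step.hyps by simp
  with step show ?case by (simp add: algebra_simps)
qed simp

lemma diff_le_of_gaps_le:
  fixes y :: "int \<Rightarrow> real"
  assumes "i \<le> j" and "\<And>t. i < t \<Longrightarrow> t \<le> j \<Longrightarrow> y t - y (t - 1) \<le> a"
  shows "y j - y i \<le> a * of_int (j - i)"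
  using diff_ge_of_gaps_ge[of i j "-a" "\<lambda>k. - y k"] assms by (simp add: algebra_simps)

lemma gaps_uniform_tail:
  fixes y :: "int \<Rightarrow> real"
  assumes "\<And>k. n \<le> k \<Longrightarrow> y (k + 1) - y k = d" and "n \<le> j"
  shows "y j = y n + of_int (j - n) * d"
  using diff_ge_of_gaps_ge[of n j d y] diff_le_of_gaps_le[of n j y d] assms
  by (smt (verit, best) mult.commute)

lemma integral_ge_left_endpoint:
  fixes F :: "real \<Rightarrow> real"
  assumes mono: "\<And>s t. 0 < s \<Longrightarrow> s \<le> t \<Longrightarrow> F t \<le> F s"
    and cont: "continuous_on {0<..} F" and "0 < u" "u \<le> v"
  shows "(v - u) * F v \<le> integral {u..v} F"
proof -
  have "integral {u..v} (\<lambda>_. F v) \<le> integral {u..v} F"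
  proof (rule integral_le)
    show "F integrable_on {u..v}"
      by (rule integrable_continuous_interval, rule continuous_on_subset[OF cont]) (use assms in auto)
  qed (use assms in auto)
  then show ?thesis using \<open>u \<le> v\<close> by simp
qed

text \<open>Integral test: e times the value of F at the right end of each cell [e j, e (j+1)]
  is below the integral over the cell, and far enough out the cells lie in [1, \<infinity>).\<close>
lemma summable_decreasing_integrable:
  fixes F :: "real \<Rightarrow> real"
  assumes pos: "\<And>t. 0 < t \<Longrightarrow> 0 \<le> F t"
    and mono: "\<And>s t. 0 < s \<Longrightarrow> s \<le> t \<Longrightarrow> F t \<le> F s"
    and cont: "continuous_on {0<..} F" and int: "F integrable_on {1..}" and e: "0 < e"
  shows "summable (\<lambda>j. F (e * (real j + 1)))"
proof -
  obtain J :: nat where J: "1 \<le> e * real J"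
    using e by (metis real_arch_simple mult.commute pos_divide_le_eq)
  define u where "u j = e * real (j + J)" for j
  have u_pos: "0 < u j" for j
    using J e by (smt (verit, best) mult_left_mono of_nat_0_le_iff of_nat_add u_def)
  have u_step: "u (Suc j) - u j = e" for j
    by (simp add: u_def algebra_simps)
  have u_mono: "u j \<le> u (Suc j)" for j
    using u_step[of j] e by simp
  have partial: "e * (\<Sum>j<N. F (u (Suc j))) \<le> integral {u 0..u N} F" for N
  proof (induction N)
    case (Suc N)
    have "(u (Suc N) - u N) * F (u (Suc N)) \<le> integral {u N..u (Suc N)} F"
      by (rule integral_ge_left_endpoint[of F, OF mono cont u_pos u_mono])
    then have "e * F (u (Suc N)) \<le> integral {u N..u (Suc N)} F"
      by (simp add: u_step)
    moreover have "integral {u 0..u N} F + integral {u N..u (Suc N)} F = integral {u 0..u (Suc N)} F"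
      by (rule Henstock_Kurzweil_Integration.integral_combine)
         (use e u_pos[of 0] in \<open>auto simp: u_def intro!: integrable_continuous_interval
            continuous_on_subset[OF cont]\<close>)
    ultimately show ?case using Suc by (simp add: algebra_simps)
  qed simp
  have "integral {u 0..u N} F \<le> integral {1..} F" for N
    by (rule integral_subset_le)
       (use J e pos int in \<open>auto simp: u_def intro!: integrable_continuous_interval
          continuous_on_subset[OF cont] order_trans[OF J] mult_left_mono\<close>)
  with partial have "(\<Sum>j<N. F (u (Suc j))) \<le> integral {1..} F / e" for N
    using e by (smt (verit, best) mult.commute pos_le_divide_eq)
  then have "summable (\<lambda>j. F (u (Suc j)))"
    using pos u_pos by (intro summableI_nonneg_bounded[where x="integral {1..} F / e"]) auto
  moreover have "u (Suc j) = e * (real (j + J) + 1)" for j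
    by (simp add: u_def algebra_simps)
  ultimately show ?thesis
    using summable_iff_shift[of "\<lambda>j. F (e * (real j + 1))" J] by simp
qed

lemma obtain_max_on_int_interval:
  fixes f :: "int \<Rightarrow> real"
  assumes "m \<le> n"
  obtains i where "m \<le> i" "i \<le> n" "\<And>k. m \<le> k \<Longrightarrow> k \<le> n \<Longrightarrow> f k \<le> f i"
proof -
  obtain i where i: "i \<in> {m..n}" "Max (f ` {m..n}) = f i"
    using obtains_MAX[of "{m..n}" f] assms by auto
  moreover have "f k \<le> f i" if "m \<le> k" "k \<le> n" for k
    using Max_ge[of "f ` {m..n}" "f k"] i that by simp
  ultimately show ?thesis by (intro that[of i]) auto
qed

lemma obtain_min_on_int_interval:
  fixes f :: "int \<Rightarrow> real"
  assumes "m \<le> n"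
  obtains i where "m \<le> i" "i \<le> n" "\<And>k. m \<le> k \<Longrightarrow> k \<le> n \<Longrightarrow> f i \<le> f k"
  using obtain_max_on_int_interval[OF assms, of "\<lambda>k. - f k"] by auto

lemma has_sum_lessThan_of_sums:
  fixes f :: "int \<Rightarrow> real"
  assumes "\<And>m. m < i \<Longrightarrow> 0 \<le> f m" and "(\<lambda>j. f (i - 1 - int j)) sums s"
  shows "(f has_sum s) {..<i}"
proof -
  have "bij_betw (\<lambda>j::nat. i - 1 - int j) UNIV {..<i}"
    by (rule bij_betw_byWitness[where f'="\<lambda>m. nat (i - 1 - m)"]) auto
  moreover have "((\<lambda>j. f (i - 1 - int j)) has_sum s) UNIV"
    by (rule sums_nonneg_imp_has_sum_strong) (use assms in auto)
  ultimately show ?thesis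
    using has_sum_reindex_bij_betw by blast
qed

lemma has_sum_greaterThan_of_sums:
  fixes f :: "int \<Rightarrow> real"
  assumes "\<And>m. i < m \<Longrightarrow> 0 \<le> f m" and "(\<lambda>j. f (i + 1 + int j)) sums s"
  shows "(f has_sum s) {i<..}"
proof -
  have "bij_betw (\<lambda>j::nat. i + 1 + int j) UNIV {i<..}"
    by (rule bij_betw_byWitness[where f'="\<lambda>m. nat (m - i - 1)"]) auto
  moreover have "((\<lambda>j. f (i + 1 + int j)) has_sum s) UNIV"
    by (rule sums_nonneg_imp_has_sum_strong) (use assms in auto)
  ultimately show ?thesis
    using has_sum_reindex_bij_betw by blast
qed

lemma pointwise_convergent_subseq:
  fixes Y :: "nat \<Rightarrow> 'a::countable \<Rightarrow> real"
  assumes bounded: "\<And>j. bounded (range (\<lambda>k. Y k j))"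
  obtains r where "strict_mono r" and "\<And>j. convergent (\<lambda>k. Y (r k) j)"
proof -
  define P where "P n s \<longleftrightarrow> convergent (\<lambda>k. Y (s k) (from_nat n))" for n and s :: "nat \<Rightarrow> nat"
  interpret subseqs P
  proof
    fix n and s :: "nat \<Rightarrow> nat"
    have "bounded (range (\<lambda>k. Y (s k) (from_nat n)))"
      by (rule bounded_subset[OF bounded[of "from_nat n"]]) auto
    then obtain l r where "strict_mono r" "((\<lambda>k. Y (s k) (from_nat n)) \<circ> r) \<longlonglongrightarrow> l"
      using bounded_imp_convergent_subsequence by blast
    then show "\<exists>r. strict_mono r \<and> P n (s \<circ> r)"
      unfolding P_def by (auto simp: convergent_def o_def)
  qed
  have "convergent (\<lambda>k. Y (diagseq k) j)" for j
  proof -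
    have "P (to_nat j) (diagseq \<circ> (+) (Suc (to_nat j)))"
      by (rule diagseq_holds)
         (auto simp: P_def o_def intro: convergent_subseq_convergent[unfolded o_def])
    then show ?thesis
      using convergent_ignore_initial_segment[of "\<lambda>k. Y (diagseq k) j" "Suc (to_nat j)"]
      by (simp add: P_def o_def add.commute)
  qed
  with subseq_diagseq show ?thesis by (rule that)
qed

lemma monotone_zero_crossing:
  fixes \<phi> :: "real \<Rightarrow> real"
  assumes mono: "\<And>d d'. 0 < d \<Longrightarrow> d \<le> d' \<Longrightarrow> \<phi> d \<le> \<phi> d'"
    and cont: "\<And>dk dl. monoseq dk \<Longrightarrow> dk \<longlonglongrightarrow> dl \<Longrightarrow> 0 < dl \<Longrightarrow> (\<And>k. 0 < dk k) \<Longrightarrow>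
                 (\<lambda>k. \<phi> (dk k)) \<longlonglongrightarrow> \<phi> dl"
    and d0: "0 < d0" "\<phi> d0 \<le> 0" and large: "\<And>d. M < d \<Longrightarrow> 0 < \<phi> d"
  obtains d where "0 < d" and "\<phi> d = 0"
proof -
  define D where "D = {d. 0 < d \<and> \<phi> d \<le> 0}"
  have "d0 \<in> D" using d0 by (simp add: D_def)
  moreover have bdd: "bdd_above D"
  proof (rule bdd_aboveI)
    fix d assume "d \<in> D"
    then show "d \<le> M" using large[of d] by (auto simp: D_def not_le[symmetric])
  qed
  ultimately have "d0 \<le> Sup D" by (rule cSup_upper)
  with d0 have pos: "0 < Sup D" by linarith
  have "\<phi> (Sup D) \<le> 0"
  proof -
    define dk where "dk k = Sup D - Sup D / real (k + 2)" for k
    have "(\<lambda>k. Sup D / real (k + 2)) \<longlonglongrightarrow> 0"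
      using LIMSEQ_ignore_initial_segment[OF lim_const_over_n[of "Sup D"], of 2] by simp
    then have "dk \<longlonglongrightarrow> Sup D - 0"
      unfolding dk_def by (intro tendsto_intros)
    moreover have "incseq dk"
      using pos by (intro incseq_SucI) (simp add: dk_def field_simps)
    moreover have dk_pos: "0 < dk k" and "dk k < Sup D" for k
      using pos by (simp_all add: dk_def field_simps add_pos_nonneg)
    moreover have "\<phi> (dk k) \<le> 0" for k
    proof -
      obtain d' where "d' \<in> D" "dk k < d'"
        using less_cSupD[OF _ \<open>dk k < Sup D\<close>] \<open>d0 \<in> D\<close> by blast
      then show ?thesis
        using mono[of "dk k" d'] dk_pos[of k] by (auto simp: D_def)
    qed
    ultimately show ?thesis
      using cont[of dk "Sup D"] pos by (intro LIMSEQ_le_const2) (auto simp: monoseq_iff)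
  qed
  moreover have "0 \<le> \<phi> (Sup D)"
  proof -
    define dk where "dk k = Sup D + 1 / real (Suc k)" for k
    have "dk \<longlonglongrightarrow> Sup D + 0"
      unfolding dk_def by (intro tendsto_intros LIMSEQ_Suc[OF lim_const_over_n])
    moreover have "decseq dk"
      by (intro decseq_SucI) (simp add: dk_def frac_le)
    moreover have "0 < \<phi> (dk k)" for k
    proof (rule ccontr)
      assume "\<not> 0 < \<phi> (dk k)"
      then have "dk k \<in> D" using pos by (simp add: D_def dk_def add_pos_pos)
      then show False using cSup_upper[OF _ bdd, of "dk k"] by (simp add: dk_def)
    qed
    ultimately show ?thesis
      using cont[of dk "Sup D"] pos
      by (intro LIMSEQ_le_const) (auto simp: monoseq_iff dk_def add_pos_pos less_imp_le)
  qed
  ultimately show ?thesis using pos that by simp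
qed

text \<open>If the particles of y separate at least linearly, all force sums on y converge,
  uniformly over the configurations sharing the same constants a and C.\<close>
definition spread_at :: "real \<Rightarrow> real \<Rightarrow> (int \<Rightarrow> real) \<Rightarrow> bool" where
  "spread_at a C y \<longleftrightarrow> (\<forall>i j. i \<le> j \<longrightarrow> a * of_int (j - i) - C \<le> y j - y i)"

definition spreading :: "(int \<Rightarrow> real) \<Rightarrow> bool" where
  "spreading y \<longleftrightarrow> (\<exists>a C. 0 < a \<and> spread_at a C y)"

lemma spread_at_shift:
  assumes "spread_at a C y"
  shows "spread_at a C (\<lambda>k. y (k + 1) + t)"
  unfolding spread_at_def
proof (intro allI impI)
  fix i j :: int assume "i \<le> j"
  have "\<forall>i j. i \<le> j \<longrightarrow> a * of_int (j - i) - C \<le> y j - y i"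
    using assms by (simp only: spread_at_def)
  from this[rule_format, of "i + 1" "j + 1"] \<open>i \<le> j\<close>
  have "a * of_int ((j + 1) - (i + 1)) - C \<le> y (j + 1) - y (i + 1)"
    by linarith
  then show "a * of_int (j - i) - C \<le> y (j + 1) + t - (y (i + 1) + t)" by simp
qed

lemma spreading_shift: "spreading y \<Longrightarrow> spreading (\<lambda>k. y (k + 1) + t)"
  unfolding spreading_def using spread_at_shift by blast

lemma spread_at_of_gaps:
  assumes "\<And>k. a \<le> y (k + 1) - y k"
  shows "spread_at a 0 y"
  unfolding spread_at_def
proof (intro allI impI)
  fix i j :: int assume "i \<le> j"
  then have "a * of_int (j - i) \<le> y j - y i"
    by (rule diff_ge_of_gaps_ge) (use assms[of "_ - 1"] in simp)
  then show "a * of_int (j - i) - 0 \<le> y j - y i" by simp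
qed

lemma spreading_of_gaps: "0 < a \<Longrightarrow> (\<And>k. a \<le> y (k + 1) - y k) \<Longrightarrow> spreading y"
  unfolding spreading_def using spread_at_of_gaps by blast

lemma spread_at_three_pieces:
  fixes y :: "int \<Rightarrow> real"
  assumes left: "\<And>i j. i \<le> j \<Longrightarrow> j \<le> 0 \<Longrightarrow> a * of_int (j - i) \<le> y j - y i"
    and middle: "\<And>i j. 0 \<le> i \<Longrightarrow> i \<le> j \<Longrightarrow> j \<le> n \<Longrightarrow> a * of_int (j - i) - C \<le> y j - y i"
    and right: "\<And>i j. n \<le> i \<Longrightarrow> i \<le> j \<Longrightarrow> a * of_int (j - i) \<le> y j - y i"
    and "0 \<le> C" "0 \<le> n"
  shows "spread_at a C y"
  unfolding spread_at_def
proof (intro allI impI)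
  fix i j :: int assume ij: "i \<le> j"
  consider "j \<le> 0" | "n \<le> i" | "0 \<le> i" "j \<le> n" | "0 \<le> i" "i < n" "n < j"
    | "i < 0" "0 < j" "j \<le> n" | "i < 0" "n < j"
    by linarith
  then show "a * of_int (j - i) - C \<le> y j - y i"
  proof cases
    case 1
    then show ?thesis using left[OF ij] \<open>0 \<le> C\<close> by linarith
  next
    case 2
    then show ?thesis using right[OF _ ij] \<open>0 \<le> C\<close> by linarith
  next
    case 3
    then show ?thesis using middle[OF _ ij] by linarith
  next
    case 4
    then show ?thesis using middle[of i n] right[of n j] by (simp add: algebra_simps)
  next
    case 5
    then show ?thesis using left[of i 0] middle[of 0 j] by (simp add: algebra_simps)
  next
    case 6
    then show ?thesis using left[of i 0] middle[of 0 n] right[of n j] assms(5)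
      by (simp add: algebra_simps)
  qed
qed

section \<open>Forces and the comparison principle\<close>

locale force_law =
  fixes F :: "real \<Rightarrow> real"
  assumes F_pos: "\<And>t. 0 < t \<Longrightarrow> 0 < F t"
    and F_less: "\<And>s t. 0 < s \<Longrightarrow> s < t \<Longrightarrow> F t < F s"
    and F_cont: "continuous_on {0<..} F"
    and F_integrable: "F integrable_on {1..}"
begin

lemma F_antimono: "0 < s \<Longrightarrow> s \<le> t \<Longrightarrow> F t \<le> F s"
  using F_less[of s t] by (cases "s = t") auto

end

locale force_law_cutoff = force_law +
  fixes c :: real
  assumes c_pos: "0 < c"
begin

text \<open>Below the cutoff c the force law is continued linearly. This makes it positive,
  strictly decreasing and continuous on all of \<real>, so that comparison arguments apply also
  to configurations that are not increasing; on configurations whose gaps are at least c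
  it agrees with F.\<close>
definition force :: "real \<Rightarrow> real" where
  "force t = F (max c t) + max 0 (c - t)"

lemma force_pos: "0 < force t"
  using F_pos[of "max c t"] c_pos by (simp add: force_def less_max_iff_disj add_pos_nonneg)

lemma force_ge: "c - t \<le> force t"
  using F_pos[of "max c t"] c_pos by (simp add: force_def less_max_iff_disj)

lemma force_less: "s < t \<Longrightarrow> force t < force s"
  unfolding force_def using c_pos F_antimono[of "max c s" "max c t"] F_less[of "max c s" "max c t"]
  by (cases "t \<le> c"; cases "s \<le> c") (auto simp: max_def)

lemma force_antimono: "s \<le> t \<Longrightarrow> force t \<le> force s"
  using force_less[of s t] by (cases "s = t") auto

lemma force_eq_F: "c \<le> t \<Longrightarrow> force t = F t"
  by (simp add: force_def max_def)

lemma isCont_force: "isCont force t"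
proof -
  have "isCont F s" if "0 < s" for s
    using F_cont that continuous_on_eq_continuous_at[of "{0<..}" F] by auto
  then have "isCont (\<lambda>t. F (max c t)) t"
    by (intro continuous_at_compose[unfolded o_def, of _ "max c" F])
       (auto intro!: continuous_intros simp: c_pos less_max_iff_disj)
  then show ?thesis unfolding force_def by (auto intro!: continuous_intros)
qed

lemma summable_force_linear:
  assumes a: "0 < a"
  shows "summable (\<lambda>j. force (a * (real j + 1) - C))"
proof (rule summable_comparison_test')
  show "summable (\<lambda>j. F (a / 2 * (real j + 1)))"
    using a F_pos F_antimono F_cont F_integrable
    by (intro summable_decreasing_integrable) (auto intro: less_imp_le)
  define N where "N = nat \<lceil>2 * (\<bar>C\<bar> + c) / a\<rceil>"
  show "norm (force (a * (real j + 1) - C)) \<le> F (a / 2 * (real j + 1))" if "N \<le> j" for j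
  proof -
    have "2 * (\<bar>C\<bar> + c) / a \<le> real j" using that unfolding N_def by linarith
    then have "2 * (\<bar>C\<bar> + c) \<le> a * real j" using a by (simp add: field_simps)
    moreover have "a / 2 * (real j + 1) = a * real j / 2 + a / 2" "a * (real j + 1) = a * real j + a"
      by (simp_all add: algebra_simps)
    ultimately have le: "a / 2 * (real j + 1) \<le> a * (real j + 1) - C"
      and ge: "c \<le> a / 2 * (real j + 1)"
      using a abs_ge_self[of C] c_pos by auto
    then have "force (a * (real j + 1) - C) = F (a * (real j + 1) - C)"
      by (intro force_eq_F) linarith
    also have "\<dots> \<le> F (a / 2 * (real j + 1))"
      using le ge c_pos by (intro F_antimono) auto
    finally show ?thesis using force_pos[of "a * (real j + 1) - C"] by simp
  qed
qed

definition left_force :: "(int \<Rightarrow> real) \<Rightarrow> int \<Rightarrow> real" where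
  "left_force y i = (\<Sum>j. force (y i - y (i - 1 - int j)))"

definition right_force :: "(int \<Rightarrow> real) \<Rightarrow> int \<Rightarrow> real" where
  "right_force y i = (\<Sum>j. force (y (i + 1 + int j) - y i))"

text \<open>A positive net force pushes particle i to the right.\<close>
definition net_force :: "(int \<Rightarrow> real) \<Rightarrow> int \<Rightarrow> real" where
  "net_force y i = left_force y i - right_force y i"

lemma left_term_le: "spread_at a C y \<Longrightarrow> force (y i - y (i - 1 - int j)) \<le> force (a * (real j + 1) - C)"
  unfolding spread_at_def
  by (rule force_antimono) (drule spec[of _ "i - 1 - int j"], drule spec[of _ i], simp add: algebra_simps)

lemma right_term_le: "spread_at a C y \<Longrightarrow> force (y (i + 1 + int j) - y i) \<le> force (a * (real j + 1) - C)"
  unfolding spread_at_def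
  by (rule force_antimono) (drule spec[of _ i], drule spec[of _ "i + 1 + int j"], simp add: algebra_simps)

lemma summable_left_terms:
  assumes "spreading y"
  shows "summable (\<lambda>j. force (y i - y (i - 1 - int j)))"
proof -
  obtain a C where "0 < a" "spread_at a C y" using assms by (auto simp: spreading_def)
  then show ?thesis
    by (intro summable_comparison_test[OF _ summable_force_linear[of a C]])
       (auto intro!: exI[of _ 0] left_term_le simp: abs_of_pos force_pos)
qed

lemma summable_right_terms:
  assumes "spreading y"
  shows "summable (\<lambda>j. force (y (i + 1 + int j) - y i))"
proof -
  obtain a C where "0 < a" "spread_at a C y" using assms by (auto simp: spreading_def)
  then show ?thesis
    by (intro summable_comparison_test[OF _ summable_force_linear[of a C]])
       (auto intro!: exI[of _ 0] right_term_le simp: abs_of_pos force_pos)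
qed

text \<open>Comparison principle: if y - z is largest at i, every particle of y lies at least as
  close to y i as its counterpart in z lies to z i on the left, and at least as far on the
  right.\<close>
lemma left_force_le_of_max:
  assumes "spreading y" "spreading z" "\<And>j. y j - z j \<le> y i - z i"
  shows "left_force y i \<le> left_force z i"
  unfolding left_force_def
proof (rule suminf_le)
  show "force (y i - y (i - 1 - int j)) \<le> force (z i - z (i - 1 - int j))" for j
    using assms(3)[of "i - 1 - int j"] by (intro force_antimono) linarith
qed (use assms summable_left_terms in auto)

lemma right_force_le_of_max:
  assumes "spreading y" "spreading z" "\<And>j. y j - z j \<le> y i - z i"
  shows "right_force z i \<le> right_force y i"
  unfolding right_force_def
proof (rule suminf_le)
  show "force (z (i + 1 + int j) - z i) \<le> force (y (i + 1 + int j) - y i)" for j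
    using assms(3)[of "i + 1 + int j"] by (intro force_antimono) linarith
qed (use assms summable_right_terms in auto)

lemma net_force_le_of_max:
  assumes "spreading y" "spreading z" "\<And>j. y j - z j \<le> y i - z i"
  shows "net_force y i \<le> net_force z i"
  using left_force_le_of_max[OF assms] right_force_le_of_max[OF assms]
  unfolding net_force_def by linarith

lemma net_force_less_of_max:
  assumes y: "spreading y" and z: "spreading z" and max: "\<And>j. y j - z j \<le> y i - z i"
    and strict: "y m - z m < y i - z i"
  shows "net_force y i < net_force z i"
proof (cases "m < i")
  case True
  then have m: "m = i - 1 - int (nat (i - 1 - m))" by simp
  have "left_force y i < left_force z i"
    unfolding left_force_def
  proof (rule suminf_less_suminf)
    show "force (y i - y (i - 1 - int (nat (i - 1 - m))))
        < force (z i - z (i - 1 - int (nat (i - 1 - m))))"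
      using strict by (subst (1 2) m[symmetric]) (intro force_less, simp)
    show "force (y i - y (i - 1 - int j)) \<le> force (z i - z (i - 1 - int j))" for j
      using max[of "i - 1 - int j"] by (intro force_antimono) linarith
  qed (use y z summable_left_terms in auto)
  then show ?thesis using right_force_le_of_max[OF y z max] unfolding net_force_def by linarith
next
  case False
  with strict have "i < m" by (cases "m = i") auto
  then have m: "m = i + 1 + int (nat (m - i - 1))" by simp
  have "right_force z i < right_force y i"
    unfolding right_force_def
  proof (rule suminf_less_suminf)
    show "force (z (i + 1 + int (nat (m - i - 1))) - z i)
        < force (y (i + 1 + int (nat (m - i - 1))) - y i)"
      using strict by (subst (1 2) m[symmetric]) (intro force_less, simp)
    show "force (z (i + 1 + int j) - z i) \<le> force (y (i + 1 + int j) - y i)" for j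
      using max[of "i + 1 + int j"] by (intro force_antimono) linarith
  qed (use y z summable_right_terms in auto)
  then show ?thesis using left_force_le_of_max[OF y z max] unfolding net_force_def by linarith
qed

lemma net_force_shift: "net_force (\<lambda>k. y (k + 1) + t) i = net_force y (i + 1)"
  unfolding net_force_def left_force_def right_force_def by (simp add: algebra_simps)

lemma net_force_uniform: "net_force (\<lambda>k. p + of_int k * d) i = 0"
  unfolding net_force_def left_force_def right_force_def by (simp add: algebra_simps)

lemma right_force_linear:
  "(\<And>k. i \<le> k \<Longrightarrow> y k = p + of_int k * d) \<Longrightarrow> right_force y i = (\<Sum>j. force (d * (real j + 1)))"
  unfolding right_force_def by (rule suminf_cong) (simp add: algebra_simps)

lemma tendsto_net_force:
  assumes a: "0 < a" and spread: "\<And>k. spread_at a C (Y k)"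
    and lim: "\<And>j. (\<lambda>k. Y k j) \<longlonglongrightarrow> Z j"
  shows "(\<lambda>k. net_force (Y k) i) \<longlonglongrightarrow> net_force Z i"
proof -
  have "(\<lambda>k. left_force (Y k) i) \<longlonglongrightarrow> left_force Z i"
    unfolding left_force_def
  proof (rule tannerys_theorem[THEN conjunct2, THEN conjunct2])
    show "summable (\<lambda>j. force (a * (real j + 1) - C))" using a by (rule summable_force_linear)
  qed (use spread in \<open>auto intro!: isCont_tendsto_compose[OF isCont_force] tendsto_intros lim
      always_eventually left_term_le simp: abs_of_pos force_pos\<close>)
  moreover have "(\<lambda>k. right_force (Y k) i) \<longlonglongrightarrow> right_force Z i"
    unfolding right_force_def
  proof (rule tannerys_theorem[THEN conjunct2, THEN conjunct2])
    show "summable (\<lambda>j. force (a * (real j + 1) - C))" using a by (rule summable_force_linear)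
  qed (use spread in \<open>auto intro!: isCont_tendsto_compose[OF isCont_force] tendsto_intros lim
      always_eventually right_term_le simp: abs_of_pos force_pos\<close>)
  ultimately show ?thesis unfolding net_force_def by (intro tendsto_intros)
qed

text \<open>Compare y with its shift by one index, translated so that both agree at i: their
  difference is largest where the gap of y is smallest.\<close>
lemma net_force_less_at_min_gap:
  assumes y: "spreading y" and min: "\<And>j. y (i + 1) - y i \<le> y (j + 1) - y j"
    and strict: "y (i + 1) - y i < y (m + 1) - y m"
  shows "net_force y i < net_force y (i + 1)"
proof -
  define z where "z k = y (k + 1) + (y i - y (i + 1))" for k
  have "net_force y i < net_force z i"
  proof (rule net_force_less_of_max[OF y])
    show "spreading z" unfolding z_def by (rule spreading_shift[OF y])
    show "y j - z j \<le> y i - z i" for j using min[of j] by (simp add: z_def)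
    show "y m - z m < y i - z i" using strict by (simp add: z_def)
  qed
  also have "net_force z i = net_force y (i + 1)"
    unfolding z_def by (rule net_force_shift)
  finally show ?thesis .
qed

lemma net_force_less_at_max_gap:
  assumes y: "spreading y" and max: "\<And>j. y (j + 1) - y j \<le> y (i + 1) - y i"
    and strict: "y (m + 1) - y m < y (i + 1) - y i"
  shows "net_force y (i + 1) < net_force y i"
proof -
  define z where "z k = y (k + 1) + (y i - y (i + 1))" for k
  have "net_force z i < net_force y i"
  proof (rule net_force_less_of_max[OF _ y])
    show "spreading z" unfolding z_def by (rule spreading_shift[OF y])
    show "z j - y j \<le> z i - y i" for j using max[of j] by (simp add: z_def)
    show "z m - y m < z i - y i" using strict by (simp add: z_def)
  qed
  moreover have "net_force z i = net_force y (i + 1)"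
    unfolding z_def by (rule net_force_shift)
  ultimately show ?thesis by simp
qed

text \<open>Compared with the uniform configuration of spacing d through y n, a configuration
  whose gaps are all at least d and equal to d beyond n lies below it on the left.\<close>
lemma net_force_neg_of_uniform_tail:
  assumes y: "spreading y" and d: "0 < d" and tail: "\<And>k. n \<le> k \<Longrightarrow> y (k + 1) - y k = d"
    and gaps: "\<And>k. d \<le> y (k + 1) - y k" and m: "m < n" "d < y (m + 1) - y m"
  shows "net_force y n < 0"
proof -
  define u where "u k = (y n - of_int n * d) + of_int k * d" for k
  have "net_force y n < net_force u n"
  proof (rule net_force_less_of_max[where m=m])
    show "spreading u" using d by (intro spreading_of_gaps[of d]) (simp_all add: u_def algebra_simps)
    show "y j - u j \<le> y n - u n" for j
    proof (cases "j \<le> n")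
      case True
      then show ?thesis using diff_ge_of_gaps_ge[OF True, of d y] gaps[of "_ - 1"]
        by (simp add: u_def algebra_simps)
    next
      case False
      then show ?thesis
        using gaps_uniform_tail[where y=y and n=n and d=d, OF tail, of j]
        by (simp add: u_def algebra_simps)
    qed
    have "d * of_int (n - (m + 1)) \<le> y n - y (m + 1)"
      using m by (intro diff_ge_of_gaps_ge) (use gaps[of "_ - 1"] in auto)
    with m show "y m - u m < y n - u n" by (simp add: u_def algebra_simps)
  qed (rule y)
  also have "net_force u n = 0" unfolding u_def by (rule net_force_uniform)
  finally show ?thesis .
qed

lemma net_force_pos_of_uniform_tail:
  assumes y: "spreading y" and d: "0 < d" and tail: "\<And>k. n \<le> k \<Longrightarrow> y (k + 1) - y k = d"
    and gaps: "\<And>k. y (k + 1) - y k \<le> d" and m: "m < n" "y (m + 1) - y m < d"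
  shows "0 < net_force y n"
proof -
  define u where "u k = (y n - of_int n * d) + of_int k * d" for k
  have "net_force u n < net_force y n"
  proof (rule net_force_less_of_max[where m=m])
    show "spreading u" using d by (intro spreading_of_gaps[of d]) (simp_all add: u_def algebra_simps)
    show "u j - y j \<le> u n - y n" for j
    proof (cases "j \<le> n")
      case True
      then show ?thesis using diff_le_of_gaps_le[OF True, of y d] gaps[of "_ - 1"]
        by (simp add: u_def algebra_simps)
    next
      case False
      then show ?thesis
        using gaps_uniform_tail[where y=y and n=n and d=d, OF tail, of j]
        by (simp add: u_def algebra_simps)
    qed
    have "y n - y (m + 1) \<le> d * of_int (n - (m + 1))"
      using m by (intro diff_le_of_gaps_le) (use gaps[of "_ - 1"] in auto)
    with m show "u m - y m < u n - y n" by (simp add: u_def algebra_simps)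
  qed (rule y)
  moreover have "net_force u n = 0" unfolding u_def by (rule net_force_uniform)
  ultimately show ?thesis by simp
qed

lemma in_equilibrium_of_net_force:
  assumes gaps: "\<And>k. a \<le> y (k + 1) - y k" and "c \<le> a" and net: "net_force y i = 0"
  shows "in_equilibrium F y i"
proof -
  have spread: "spread_at a 0 y" using gaps by (rule spread_at_of_gaps)
  then have "spreading y"
    using \<open>c \<le> a\<close> c_pos unfolding spreading_def by (intro exI[of _ a] exI[of _ 0]) auto
  have far: "c \<le> y j - y i" "0 < y j - y i" if "i < j" for i j
  proof -
    have "a * 1 \<le> a * of_int (j - i)"
      using that \<open>c \<le> a\<close> c_pos by (intro mult_left_mono) auto
    with spread that \<open>c \<le> a\<close> c_pos show "c \<le> y j - y i" "0 < y j - y i"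
      unfolding spread_at_def by (smt (verit))+
  qed
  have "force (y i - y (i - 1 - int j)) = F (y i - y (i - 1 - int j))" for j
    using far(1)[of "i - 1 - int j" i] by (intro force_eq_F) simp
  then have "(\<lambda>j. F (y i - y (i - 1 - int j))) sums left_force y i"
    using summable_left_terms[OF \<open>spreading y\<close>, of i]
    unfolding left_force_def by (simp add: summable_sums)
  then have L: "((\<lambda>m. F (y i - y m)) has_sum left_force y i) {..<i}"
    using far(2) by (intro has_sum_lessThan_of_sums) (auto intro!: less_imp_le[OF F_pos])
  have "force (y (i + 1 + int j) - y i) = F (y (i + 1 + int j) - y i)" for j
    using far(1)[of i "i + 1 + int j"] by (intro force_eq_F) simp
  then have "(\<lambda>j. F (y (i + 1 + int j) - y i)) sums right_force y i"
    using summable_right_terms[OF \<open>spreading y\<close>, of i]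
    unfolding right_force_def by (simp add: summable_sums)
  then have R: "((\<lambda>m. F (y m - y i)) has_sum right_force y i) {i<..}"
    using far(2) by (intro has_sum_greaterThan_of_sums) (auto intro!: less_imp_le[OF F_pos])
  show ?thesis
    using has_sum_imp_summable[OF L] has_sum_imp_summable[OF R] infsumI[OF L] infsumI[OF R] net
    unfolding in_equilibrium_def net_force_def by simp
qed

end

section \<open>Finitely many free particles\<close>

locale half_chain = force_law +
  fixes x :: "int \<Rightarrow> real" and b B :: real
  assumes b_pos: "0 < b" and b_less_B: "b < B"
    and x_gaps: "\<And>i::int. 1 \<le> i \<Longrightarrow> b \<le> x (-i) - x (-i-1) \<and> x (-i) - x (-i-1) \<le> B"
    and x0: "x (-1) < x 0"
begin

definition gap_min :: real where "gap_min = min b (x 0 - x (-1))"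

definition gap_max :: real where "gap_max = max B (x 0 - x (-1))"

lemma gap_min_pos: "0 < gap_min"
  using b_pos x0 by (simp add: gap_min_def)

lemma gap_min_less_gap_max: "gap_min < gap_max"
  using b_less_B by (auto simp: gap_min_def gap_max_def)

sublocale force_law_cutoff F "gap_min / 2"
  using gap_min_pos by unfold_locales simp

lemma x_gap_bounds: "k \<le> 0 \<Longrightarrow> gap_min \<le> x k - x (k - 1) \<and> x k - x (k - 1) \<le> gap_max"
  using x_gaps[of "-k"] by (cases "k = 0") (auto simp: gap_min_def gap_max_def)

lemma x_spread: "i \<le> j \<Longrightarrow> j \<le> 0 \<Longrightarrow> gap_min * of_int (j - i) \<le> x j - x i"
  by (rule diff_ge_of_gaps_ge) (use x_gap_bounds in auto)

definition trial_config :: "int \<Rightarrow> real \<Rightarrow> (int \<Rightarrow> real) \<Rightarrow> int \<Rightarrow> real" where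
  "trial_config n d w k =
     (if k \<le> 0 then x k else if k \<le> n then w k else w n + of_int (k - n) * d)"

lemma trial_config_left: "k \<le> 0 \<Longrightarrow> trial_config n d w k = x k"
  by (simp add: trial_config_def)

lemma trial_config_mid: "0 < k \<Longrightarrow> k \<le> n \<Longrightarrow> trial_config n d w k = w k"
  by (simp add: trial_config_def)

lemma trial_config_right: "1 \<le> n \<Longrightarrow> n \<le> k \<Longrightarrow> trial_config n d w k = w n + of_int (k - n) * d"
  by (cases "k = n") (auto simp: trial_config_def)

lemma trial_config_gap_right: "1 \<le> n \<Longrightarrow> n \<le> k \<Longrightarrow> trial_config n d w (k + 1) - trial_config n d w k = d"
  by (simp add: trial_config_right algebra_simps)

lemma trial_config_cong:
  "(\<And>i. 1 \<le> i \<Longrightarrow> i \<le> n \<Longrightarrow> w i = w' i) \<Longrightarrow> 1 \<le> n \<Longrightarrow>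
    trial_config n d w = trial_config n d w'"
  by (auto simp: trial_config_def fun_eq_iff)

lemma trial_config_linear:
  assumes "1 \<le> n" "1 \<le> k"
  shows "trial_config n d (\<lambda>i. p + of_int i * d) k = p + of_int k * d"
  using assms by (cases "k \<le> n") (auto simp: trial_config_mid trial_config_right algebra_simps)

lemma tendsto_trial_config:
  assumes "1 \<le> n" and "\<And>j. (\<lambda>k. v k j) \<longlonglongrightarrow> u j" and "dk \<longlonglongrightarrow> dl"
  shows "(\<lambda>k. trial_config n (dk k) (v k) j) \<longlonglongrightarrow> trial_config n dl u j"
proof -
  consider "j \<le> 0" | "0 < j" "j \<le> n" | "n < j" by linarith
  then show ?thesis
    by cases (use assms in \<open>auto simp: trial_config_left trial_config_mid trial_config_right
      intro!: tendsto_intros\<close>)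
qed

lemma trial_config_spread:
  assumes n: "1 \<le> n" and a: "0 < a" "a \<le> gap_min" "a \<le> d"
    and K: "\<And>i. 1 \<le> i \<Longrightarrow> i \<le> n \<Longrightarrow> \<bar>w i\<bar> \<le> K"
  shows "spread_at a (a * of_int n + 2 * (K + \<bar>x 0\<bar>)) (trial_config n d w)"
proof (rule spread_at_three_pieces[where n=n])
  show "a * of_int (j - i) \<le> trial_config n d w j - trial_config n d w i" if "i \<le> j" "j \<le> 0" for i j
    using x_spread[OF that] mult_right_mono[OF a(2), of "of_int (j - i)"] that
    by (simp add: trial_config_left)
  have bound: "\<bar>trial_config n d w k\<bar> \<le> K + \<bar>x 0\<bar>" if "0 \<le> k" "k \<le> n" for k
    using that K[of k] K[of n] n by (cases "k = 0") (auto simp: trial_config_left trial_config_mid)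
  show "a * of_int (j - i) - (a * of_int n + 2 * (K + \<bar>x 0\<bar>))
      \<le> trial_config n d w j - trial_config n d w i" if "0 \<le> i" "i \<le> j" "j \<le> n" for i j
    using bound[of i] bound[of j] that mult_left_mono[of "of_int (j - i)" "of_int n" a] a
    by (smt (verit, best) abs_le_iff of_int_le_iff)
  show "a * of_int (j - i) \<le> trial_config n d w j - trial_config n d w i" if "n \<le> i" "i \<le> j" for i j
    using that n mult_right_mono[OF a(3), of "of_int (j - i)"]
    by (simp add: trial_config_right algebra_simps)
  show "0 \<le> a * of_int n + 2 * (K + \<bar>x 0\<bar>)"
    using K[of n] n a by simp
qed (use n in simp)

lemma spreading_trial_config:
  assumes "1 \<le> n" "0 < d"
  shows "spreading (trial_config n d w)"
proof -
  have "\<bar>w i\<bar> \<le> (\<Sum>k=1..n. \<bar>w k\<bar>)" if "1 \<le> i" "i \<le> n" for i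
    using that by (intro member_le_sum) auto
  then have "spread_at (min gap_min d) (min gap_min d * of_int n + 2 * ((\<Sum>k=1..n. \<bar>w k\<bar>) + \<bar>x 0\<bar>))
      (trial_config n d w)"
    using assms gap_min_pos by (intro trial_config_spread) auto
  then show ?thesis
    unfolding spreading_def using assms gap_min_pos by (intro exI conjI) auto
qed

lemma tendsto_net_force_trial_config:
  assumes n: "1 \<le> n" and a: "0 < a" "\<And>k. a \<le> dk k" and d: "dk \<longlonglongrightarrow> dl"
    and K: "\<And>k j. 1 \<le> j \<Longrightarrow> j \<le> n \<Longrightarrow> \<bar>v k j\<bar> \<le> K"
    and v: "\<And>j. (\<lambda>k. v k j) \<longlonglongrightarrow> u j"
  shows "(\<lambda>k. net_force (trial_config n (dk k) (v k)) i) \<longlonglongrightarrow> net_force (trial_config n dl u) i"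
proof (rule tendsto_net_force)
  show "spread_at (min a gap_min) (min a gap_min * of_int n + 2 * (K + \<bar>x 0\<bar>))
      (trial_config n (dk k) (v k))" for k
    using a gap_min_pos by (intro trial_config_spread[OF n] K) (auto intro: order_trans[OF min.cobounded1])
  show "(\<lambda>k. trial_config n (dk k) (v k) j) \<longlonglongrightarrow> trial_config n dl u j" for j
    by (rule tendsto_trial_config[OF n v d])
qed (use a gap_min_pos in simp)

lemma trial_config_diff_le:
  assumes n: "1 \<le> n" and "d \<le> d'" and i: "0 \<le> i" "i \<le> n"
    and nonneg: "0 \<le> trial_config n d w i - trial_config n d' w' i"
    and le: "\<And>j. 1 \<le> j \<Longrightarrow> j \<le> n \<Longrightarrow> w j - w' j \<le> trial_config n d w i - trial_config n d' w' i"
  shows "trial_config n d w k - trial_config n d' w' k \<le> trial_config n d w i - trial_config n d' w' i"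
proof -
  consider "k \<le> 0" | "0 < k" "k \<le> n" | "n < k" by linarith
  then show ?thesis
  proof cases
    case 3
    then have "of_int (k - n) * d \<le> of_int (k - n) * d'"
      using \<open>d \<le> d'\<close> by (intro mult_left_mono) auto
    moreover have "trial_config n d w k - trial_config n d' w' k
        = (w n - w' n) + (of_int (k - n) * d - of_int (k - n) * d')"
      using 3 n by (simp add: trial_config_right)
    ultimately show ?thesis using n le[of n] by linarith
  qed (use nonneg le in \<open>auto simp: trial_config_left trial_config_mid\<close>)
qed

lemma net_force_trial_config_le:
  assumes n: "1 \<le> n" and d: "0 < d" and j: "1 \<le> j" "j \<le> n"
    and le: "\<And>k. 1 \<le> k \<Longrightarrow> k \<le> n \<Longrightarrow> w k \<le> w' k" and eq: "w j = w' j"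
  shows "net_force (trial_config n d w) j \<le> net_force (trial_config n d w') j"
proof (rule net_force_le_of_max)
  show "trial_config n d w k - trial_config n d w' k \<le> trial_config n d w j - trial_config n d w' j" for k
    using j eq le by (intro trial_config_diff_le[OF n order_refl]) (auto simp: trial_config_mid)
qed (use spreading_trial_config n d in auto)

section \<open>Perron's method\<close>

definition subsolution :: "int \<Rightarrow> real \<Rightarrow> (int \<Rightarrow> real) \<Rightarrow> bool" where
  "subsolution n d w \<longleftrightarrow> (\<forall>i. 1 \<le> i \<and> i \<le> n \<longrightarrow> 0 \<le> net_force (trial_config n d w) i)"

definition supersolution :: "int \<Rightarrow> real \<Rightarrow> (int \<Rightarrow> real) \<Rightarrow> bool" where
  "supersolution n d w \<longleftrightarrow> (\<forall>i. 1 \<le> i \<and> i \<le> n \<longrightarrow> net_force (trial_config n d w) i \<le> 0)"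

definition balanced :: "int \<Rightarrow> real \<Rightarrow> (int \<Rightarrow> real) \<Rightarrow> bool" where
  "balanced n d w \<longleftrightarrow> subsolution n d w \<and> supersolution n d w"

lemma balanced_net_force:
  "balanced n d w \<Longrightarrow> 1 \<le> i \<Longrightarrow> i \<le> n \<Longrightarrow> net_force (trial_config n d w) i = 0"
  unfolding balanced_def subsolution_def supersolution_def by (meson order.antisym)

lemma subsolution_le_supersolution:
  assumes n: "1 \<le> n" and d: "0 < d" "d \<le> d'"
    and sub: "subsolution n d w" and super: "supersolution n d' w'" and i: "1 \<le> i" "i \<le> n"
  shows "w i \<le> w' i"
proof -
  define \<delta> where "\<delta> k = trial_config n d w k - trial_config n d' w' k" for k
  obtain i0 where i0: "0 \<le> i0" "i0 \<le> n" and max: "\<And>k. 0 \<le> k \<Longrightarrow> k \<le> n \<Longrightarrow> \<delta> k \<le> \<delta> i0"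
    using obtain_max_on_int_interval[of 0 n \<delta>] n by auto
  have \<delta>0: "\<delta> 0 = 0" by (simp add: \<delta>_def trial_config_left)
  have "\<delta> i0 \<le> 0"
  proof (rule ccontr)
    assume "\<not> \<delta> i0 \<le> 0"
    then have pos: "0 < \<delta> i0" and "1 \<le> i0" using i0 \<delta>0 by (cases "i0 = 0"; simp)+
    have "net_force (trial_config n d w) i0 < net_force (trial_config n d' w') i0"
    proof (rule net_force_less_of_max[where m=0])
      show "trial_config n d w k - trial_config n d' w' k
          \<le> trial_config n d w i0 - trial_config n d' w' i0" for k
      proof (rule trial_config_diff_le[OF n d(2) i0])
        show "w j - w' j \<le> trial_config n d w i0 - trial_config n d' w' i0" if "1 \<le> j" "j \<le> n" for j
          using max[of j] that by (simp add: \<delta>_def trial_config_mid)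
      qed (use pos in \<open>simp add: \<delta>_def\<close>)
    qed (use pos \<delta>0 n d spreading_trial_config in \<open>auto simp: \<delta>_def\<close>)
    with sub super i0 \<open>1 \<le> i0\<close> show False
      unfolding subsolution_def supersolution_def by fastforce
  qed
  then show ?thesis using max[of i] i by (simp add: \<delta>_def trial_config_mid)
qed

lemma balanced_unique:
  "1 \<le> n \<Longrightarrow> 0 < d \<Longrightarrow> balanced n d w \<Longrightarrow> balanced n d w' \<Longrightarrow> 1 \<le> i \<Longrightarrow> i \<le> n \<Longrightarrow>
    w i = w' i"
  unfolding balanced_def using subsolution_le_supersolution[of n d d] by (meson order.antisym order_refl)

text \<open>Placed far to the left of particle 0, each free particle is pushed by particle 0
  with a continued force growing linearly in the overlap, which exceeds the whole push of
  the uniform tail from the right.\<close>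
lemma linear_subsolution_exists:
  assumes n: "1 \<le> n" and d: "0 < d"
  shows "\<exists>p. subsolution n d (\<lambda>k. p + of_int k * d)"
proof -
  define S where "S = (\<Sum>j. force (d * (real j + 1)))"
  define p where "p = - (S + of_int n * d + \<bar>x 0\<bar>)"
  define y where "y = trial_config n d (\<lambda>k. p + of_int k * d)"
  have y: "y k = p + of_int k * d" if "1 \<le> k" for k
    unfolding y_def using trial_config_linear[OF n that] .
  have "0 \<le> net_force y i" if i: "1 \<le> i" "i \<le> n" for i
  proof -
    have R: "right_force y i = S"
      unfolding S_def by (rule right_force_linear) (use i y in auto)
    have "summable (\<lambda>j. force (y i - y (i - 1 - int j)))"
      unfolding y_def by (rule summable_left_terms[OF spreading_trial_config[OF n d]])
    then have "force (y i - y (i - 1 - int j)) \<le> left_force y i" for j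
      unfolding left_force_def
      using sum_le_suminf[of _ "{j}"] force_pos by (auto intro: less_imp_le)
    from this[of "nat (i - 1)"] i have L: "force (y i - x 0) \<le> left_force y i"
      by (simp add: y_def trial_config_left)
    have "of_int i * d \<le> of_int n * d"
      using i d by (intro mult_right_mono) auto
    then have "S \<le> gap_min / 2 - (y i - x 0)"
      using y[of i] i gap_min_pos by (simp add: p_def)
    with R L show ?thesis
      using force_ge[of "y i - x 0"] unfolding net_force_def by linarith
  qed
  then show ?thesis unfolding subsolution_def y_def by blast
qed

text \<open>Free particles 1..i-1 push particle i exactly as the first i-1 particles of the
  uniform tail push it back; the given particles are put so far to the left that together
  they push less than the next particle of the tail.\<close>
lemma linear_supersolution_exists:
  assumes n: "1 \<le> n" and d: "0 < d"
  shows "\<exists>q. supersolution n d (\<lambda>k. q + of_int k * d)"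
proof -
  define S where "S = (\<Sum>j. force (d * (real j + 1)))"
  have S_summable: "summable (\<lambda>j. force (d * (real j + 1)))"
    using summable_force_linear[OF d, of 0] by simp
  have far_summable: "summable (\<lambda>j. force (gap_min * (real j + 1)))"
    using summable_force_linear[OF gap_min_pos, of 0] by simp
  obtain N where N: "norm (\<Sum>r. force (gap_min * (real (r + N) + 1))) < force (of_int n * d)"
    using suminf_exist_split[OF force_pos far_summable] by blast
  define q where "q = \<bar>x 0\<bar> + gap_min * (real N + 1)"
  define y where "y = trial_config n d (\<lambda>k. q + of_int k * d)"
  have y: "y k = q + of_int k * d" if "1 \<le> k" for k
    unfolding y_def using trial_config_linear[OF n that] .
  have "net_force y i \<le> 0" if i: "1 \<le> i" "i \<le> n" for i
  proof -
    define l where "l = nat (i - 1)"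
    have il: "i = int l + 1" using i by (simp add: l_def)
    have tail: "force (y i - y (i - 1 - int (r + l))) \<le> force (gap_min * (real (r + N) + 1))" for r
    proof -
      have "gap_min * of_int (0 - (- int r)) \<le> x 0 - x (- int r)"
        by (rule x_spread) auto
      moreover have "0 \<le> of_int i * d" using i d by simp
      ultimately have "gap_min * (real (r + N) + 1) \<le> y i - x (- int r)"
        using y[of i] i abs_ge_self[of "x 0"] by (simp add: q_def algebra_simps)
      then show ?thesis
        using il by (simp add: y_def force_antimono trial_config_left)
    qed
    have "(\<Sum>r. force (y i - y (i - 1 - int (r + l)))) \<le> (\<Sum>r. force (gap_min * (real (r + N) + 1)))"
      using summable_left_terms[OF spreading_trial_config[OF n d]]
      by (intro suminf_le tail summable_iff_shift[THEN iffD2] far_summable) (simp add: y_def)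
    also have "\<dots> < force (of_int n * d)"
      using N by simp
    also have "\<dots> \<le> force (d * (real l + 1))"
    proof (rule force_antimono)
      have "real l + 1 \<le> of_int n" using il i by simp
      then show "d * (real l + 1) \<le> of_int n * d"
        using d by (simp add: mult.commute mult_left_mono)
    qed
    finally have "left_force y i \<le> S"
      unfolding left_force_def S_def
    proof (intro suminf_le_of_initial_eq S_summable less_imp_le[OF force_pos])
      show "summable (\<lambda>j. force (y i - y (i - 1 - int j)))"
        unfolding y_def by (rule summable_left_terms[OF spreading_trial_config[OF n d]])
      show "force (y i - y (i - 1 - int j)) = force (d * (real j + 1))" if "j < l" for j
        using il that by (simp add: y algebra_simps)
    qed simp
    moreover have "right_force y i = S"
      unfolding S_def by (rule right_force_linear) (use i y in auto)
    ultimately show ?thesis unfolding net_force_def by linarith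
  qed
  then show ?thesis unfolding supersolution_def y_def by blast
qed

lemma tendsto_net_force_update:
  assumes n: "1 \<le> n" and d: "0 < d" and t: "t \<longlonglongrightarrow> w i" "\<And>k. \<bar>t k - w i\<bar> \<le> 1"
  shows "(\<lambda>k. net_force (trial_config n d (w(i := t k))) j) \<longlonglongrightarrow> net_force (trial_config n d w) j"
proof (rule tendsto_net_force_trial_config[OF n d])
  have "\<bar>t k\<bar> \<le> \<bar>w i\<bar> + 1" for k
    using t(2)[of k] by arith
  then have "\<bar>(w(i := t k)) l\<bar> \<le> \<bar>w l\<bar> + 1" for k l
    by (cases "l = i") simp_all
  then show "\<bar>(w(i := t k)) l\<bar> \<le> (\<Sum>l=1..n. \<bar>w l\<bar> + 1)" if "1 \<le> l" "l \<le> n" for k l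
    using that member_le_sum[of l "{1..n}" "\<lambda>l. \<bar>w l\<bar> + 1"] by (meson order_trans abs_ge_zero
      add_nonneg_nonneg atLeastAtMost_iff finite_atLeastAtMost_int zero_le_one)
  show "(\<lambda>k. (w(i := t k)) l) \<longlonglongrightarrow> w l" for l
    using t(1) by (cases "l = i") simp_all
qed (use d in auto)

lemma subsolution_Sup:
  assumes n: "1 \<le> n" and d: "0 < d" and ne: "P \<noteq> {}" and sub: "\<And>w. w \<in> P \<Longrightarrow> subsolution n d w"
    and bdd: "\<And>i. 1 \<le> i \<Longrightarrow> i \<le> n \<Longrightarrow> bdd_above ((\<lambda>w. w i) ` P)"
  shows "subsolution n d (\<lambda>i. SUP w\<in>P. w i)"
  unfolding subsolution_def
proof (intro allI impI)
  define ws where "ws i = (SUP w\<in>P. w i)" for i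
  fix i assume i: "1 \<le> i \<and> i \<le> n"
  have ws_ge: "w j \<le> ws j" if "w \<in> P" "1 \<le> j" "j \<le> n" for w j
    unfolding ws_def using bdd that by (intro cSUP_upper) auto
  have "ws i - 1 / real (Suc k) < ws i" for k by simp
  then have "\<exists>w\<in>P. ws i - 1 / real (Suc k) < w i" for k
    unfolding ws_def using less_cSUP_iff[OF ne bdd[of i]] i by blast
  then obtain W where W: "\<And>k. W k \<in> P" "\<And>k. ws i - 1 / real (Suc k) < W k i"
    by metis
  have W_le: "W k i \<le> ws i" for k using ws_ge[OF W(1)] i by simp
  have "0 \<le> net_force (trial_config n d (ws(i := W k i))) i" for k
  proof -
    have "net_force (trial_config n d (W k)) i \<le> net_force (trial_config n d (ws(i := W k i))) i"
      using i ws_ge[OF W(1)] by (intro net_force_trial_config_le[OF n d]) auto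
    moreover have "0 \<le> net_force (trial_config n d (W k)) i"
      using sub[OF W(1)] i by (simp add: subsolution_def)
    ultimately show ?thesis by linarith
  qed
  moreover have "(\<lambda>k. net_force (trial_config n d (ws(i := W k i))) i) \<longlonglongrightarrow> net_force (trial_config n d ws) i"
  proof (rule tendsto_net_force_update[OF n d])
    show "(\<lambda>k. W k i) \<longlonglongrightarrow> ws i"
    proof (rule tendsto_sandwich)
      show "\<forall>\<^sub>F k in sequentially. ws i - 1 / real (Suc k) \<le> W k i"
        using W(2) by (simp add: less_imp_le)
      show "(\<lambda>k. ws i - 1 / real (Suc k)) \<longlonglongrightarrow> ws i"
        using tendsto_diff[OF tendsto_const LIMSEQ_Suc[OF lim_const_over_n[of 1]], of "ws i"] by simp
      show "\<forall>\<^sub>F k in sequentially. W k i \<le> ws i"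
        using W_le by simp
    qed simp
    show "\<bar>W k i - ws i\<bar> \<le> 1" for k
    proof -
      have "1 / real (Suc k) \<le> 1" by simp
      then show ?thesis using W(2)[of k] W_le[of k] by arith
    qed
  qed
  ultimately show "0 \<le> net_force (trial_config n d (\<lambda>i. SUP w\<in>P. w i)) i"
    unfolding ws_def by (intro LIMSEQ_le_const) auto
qed

text \<open>Perron's argument: raising a particle with positive net force a little keeps a
  subsolution, so a largest subsolution is also a supersolution.\<close>
lemma supersolution_of_greatest_subsolution:
  assumes n: "1 \<le> n" and d: "0 < d" and sub: "subsolution n d w"
    and greatest: "\<And>w' i. subsolution n d w' \<Longrightarrow> 1 \<le> i \<Longrightarrow> i \<le> n \<Longrightarrow> w' i \<le> w i"
  shows "supersolution n d w"
  unfolding supersolution_def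
proof (intro allI impI)
  fix i assume i: "1 \<le> i \<and> i \<le> n"
  show "net_force (trial_config n d w) i \<le> 0"
  proof (rule ccontr)
    assume "\<not> ?thesis"
    then have pos: "0 < net_force (trial_config n d w) i" by simp
    define v where "v k = w(i := w i + 1 / real (Suc k))" for k
    have "(\<lambda>k. w i + 1 / real (Suc k)) \<longlonglongrightarrow> w i + 0"
      by (intro tendsto_intros LIMSEQ_Suc[OF lim_const_over_n])
    then have "(\<lambda>k. net_force (trial_config n d (v k)) i) \<longlonglongrightarrow> net_force (trial_config n d w) i"
      unfolding v_def by (intro tendsto_net_force_update[OF n d]) simp_all
    from order_tendstoD(1)[OF this pos] obtain k where k: "0 < net_force (trial_config n d (v k)) i"
      by (auto simp: eventually_sequentially)
    have "subsolution n d (v k)"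
      unfolding subsolution_def
    proof (intro allI impI)
      fix j assume j: "1 \<le> j \<and> j \<le> n"
      show "0 \<le> net_force (trial_config n d (v k)) j"
      proof (cases "j = i")
        case False
        then have "net_force (trial_config n d w) j \<le> net_force (trial_config n d (v k)) j"
          using j by (intro net_force_trial_config_le[OF n d]) (auto simp: v_def)
        with sub j show ?thesis by (auto simp: subsolution_def)
      qed (use k in simp)
    qed
    from greatest[OF this, of i] i show False by (simp add: v_def)
  qed
qed

lemma balanced_exists:
  assumes n: "1 \<le> n" and d: "0 < d"
  shows "\<exists>w. balanced n d w"
proof -
  define P where "P = {w. subsolution n d w}"
  obtain p where p: "subsolution n d (\<lambda>k. p + of_int k * d)"
    using linear_subsolution_exists[OF n d] by blast
  obtain q where q: "supersolution n d (\<lambda>k. q + of_int k * d)"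
    using linear_supersolution_exists[OF n d] by blast
  have ne: "P \<noteq> {}" using p by (auto simp: P_def)
  have bdd: "bdd_above ((\<lambda>w. w i) ` P)" if "1 \<le> i" "i \<le> n" for i
    using subsolution_le_supersolution[OF n d order_refl _ q that]
    by (intro bdd_aboveI[of _ "q + of_int i * d"]) (auto simp: P_def)
  define ws where "ws i = (SUP w\<in>P. w i)" for i
  have sub: "subsolution n d ws"
    unfolding ws_def by (rule subsolution_Sup[OF n d ne _ bdd]) (simp add: P_def)
  moreover have "supersolution n d ws"
  proof (rule supersolution_of_greatest_subsolution[OF n d sub])
    show "w' i \<le> ws i" if "subsolution n d w'" "1 \<le> i" "i \<le> n" for w' i
      unfolding ws_def using that bdd by (intro cSUP_upper) (auto simp: P_def)
  qed
  ultimately show ?thesis unfolding balanced_def by blast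
qed

lemma trial_config_min_gap:
  assumes n: "1 \<le> n"
  obtains i where "0 \<le> i" "i \<le> n" and "\<And>k. 0 \<le> k \<Longrightarrow>
    trial_config n d w (i + 1) - trial_config n d w i \<le> trial_config n d w (k + 1) - trial_config n d w k"
proof -
  define g where "g k = trial_config n d w (k + 1) - trial_config n d w k" for k
  obtain i where i: "0 \<le> i" "i \<le> n" and min: "\<And>k. 0 \<le> k \<Longrightarrow> k \<le> n \<Longrightarrow> g i \<le> g k"
    using obtain_min_on_int_interval[of 0 n g] n by auto
  have "g i \<le> g k" if "0 \<le> k" for k
    using min[of k] min[of n] n that trial_config_gap_right[OF n, of _ d w]
    by (cases "k \<le> n") (auto simp: g_def)
  with i that show ?thesis by (simp add: g_def)
qed

lemma trial_config_max_gap: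
  assumes n: "1 \<le> n"
  obtains i where "0 \<le> i" "i \<le> n" and "\<And>k. 0 \<le> k \<Longrightarrow>
    trial_config n d w (k + 1) - trial_config n d w k \<le> trial_config n d w (i + 1) - trial_config n d w i"
proof -
  define g where "g k = trial_config n d w (k + 1) - trial_config n d w k" for k
  obtain i where i: "0 \<le> i" "i \<le> n" and max: "\<And>k. 0 \<le> k \<Longrightarrow> k \<le> n \<Longrightarrow> g k \<le> g i"
    using obtain_max_on_int_interval[of 0 n g] n by auto
  have "g k \<le> g i" if "0 \<le> k" for k
    using max[of k] max[of n] n that trial_config_gap_right[OF n, of _ d w]
    by (cases "k \<le> n") (auto simp: g_def)
  with i that show ?thesis by (simp add: g_def)
qed

text \<open>A smallest gap below gap_min would be attained at some i in 0..n; comparison with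
  the shifted configuration (i < n) or with the uniform tail (i = n) would then push
  particle i strictly to the left.\<close>
lemma balanced_gaps_ge:
  assumes n: "1 \<le> n" and d: "0 < d" and bal: "balanced n d w"
    and net0: "0 \<le> net_force (trial_config n d w) 0"
  shows "gap_min \<le> trial_config n d w (k + 1) - trial_config n d w k"
proof -
  define y where "y = trial_config n d w"
  define g where "g k = y (k + 1) - y k" for k
  obtain i where i: "0 \<le> i" "i \<le> n" and right: "\<And>k. 0 \<le> k \<Longrightarrow> g i \<le> g k"
    using trial_config_min_gap[OF n, of d w] unfolding g_def y_def by blast
  have left: "gap_min \<le> g k" if "k < 0" for k
    using x_gap_bounds[of "k + 1"] that by (simp add: g_def y_def trial_config_left)
  have "gap_min \<le> g i"
  proof (rule ccontr)
    assume "\<not> ?thesis"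
    then have less: "g i < gap_min" by simp
    have all: "y (i + 1) - y i \<le> y (j + 1) - y j" for j
      using left[of j] right[of j] less by (cases "j < 0") (auto simp: g_def)
    have strict: "y (i + 1) - y i < y (-1 + 1) - y (-1)"
      using left[of "-1"] less by (simp add: g_def)
    have y: "spreading y" unfolding y_def by (rule spreading_trial_config[OF n d])
    have net: "net_force y j = 0" if "1 \<le> j" "j \<le> n" for j
      using balanced_net_force[OF bal that] by (simp add: y_def)
    show False
    proof (cases "i < n")
      case True
      have "net_force y i < net_force y (i + 1)"
        by (rule net_force_less_at_min_gap[OF y all strict])
      moreover have "0 \<le> net_force y i"
        using net0 net[of i] i by (cases "i = 0") (auto simp: y_def)
      ultimately show False using net[of "i + 1"] i True by simp
    next
      case False
      with i have "i = n" by simp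
      have "net_force y n < 0"
      proof (rule net_force_neg_of_uniform_tail[OF y d])
        show "y (k + 1) - y k = d" if "n \<le> k" for k
          using trial_config_gap_right[OF n that] by (simp add: y_def)
        show "d \<le> y (k + 1) - y k" for k
          using all[of k] trial_config_gap_right[OF n order_refl, of d w] \<open>i = n\<close>
          by (simp add: y_def)
        show "d < y (-1 + 1) - y (-1)"
          using strict trial_config_gap_right[OF n order_refl, of d w] \<open>i = n\<close>
          by (simp add: y_def)
      qed (use n in simp)
      then show False using net[of n] n by simp
    qed
  qed
  then show ?thesis
    using left[of k] right[of k] by (cases "k < 0") (auto simp: g_def y_def)
qed

lemma balanced_gaps_le:
  assumes n: "1 \<le> n" and d: "0 < d" and bal: "balanced n d w"
    and net0: "net_force (trial_config n d w) 0 \<le> 0"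
  shows "trial_config n d w (k + 1) - trial_config n d w k \<le> gap_max"
proof -
  define y where "y = trial_config n d w"
  define g where "g k = y (k + 1) - y k" for k
  obtain i where i: "0 \<le> i" "i \<le> n" and right: "\<And>k. 0 \<le> k \<Longrightarrow> g k \<le> g i"
    using trial_config_max_gap[OF n, of d w] unfolding g_def y_def by blast
  have left: "g k \<le> gap_max" if "k < 0" for k
    using x_gap_bounds[of "k + 1"] that by (simp add: g_def y_def trial_config_left)
  have "g i \<le> gap_max"
  proof (rule ccontr)
    assume "\<not> ?thesis"
    then have less: "gap_max < g i" by simp
    have all: "y (j + 1) - y j \<le> y (i + 1) - y i" for j
      using left[of j] right[of j] less by (cases "j < 0") (auto simp: g_def)
    have strict: "y (-1 + 1) - y (-1) < y (i + 1) - y i"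
      using left[of "-1"] less by (simp add: g_def)
    have y: "spreading y" unfolding y_def by (rule spreading_trial_config[OF n d])
    have net: "net_force y j = 0" if "1 \<le> j" "j \<le> n" for j
      using balanced_net_force[OF bal that] by (simp add: y_def)
    show False
    proof (cases "i < n")
      case True
      have "net_force y (i + 1) < net_force y i"
        by (rule net_force_less_at_max_gap[OF y all strict])
      moreover have "net_force y i \<le> 0"
        using net0 net[of i] i by (cases "i = 0") (auto simp: y_def)
      ultimately show False using net[of "i + 1"] i True by simp
    next
      case False
      with i have "i = n" by simp
      have "0 < net_force y n"
      proof (rule net_force_pos_of_uniform_tail[OF y d])
        show "y (k + 1) - y k = d" if "n \<le> k" for k
          using trial_config_gap_right[OF n that] by (simp add: y_def)
        show "y (k + 1) - y k \<le> d" for k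
          using all[of k] trial_config_gap_right[OF n order_refl, of d w] \<open>i = n\<close>
          by (simp add: y_def)
        show "y (-1 + 1) - y (-1) < d"
          using strict trial_config_gap_right[OF n order_refl, of d w] \<open>i = n\<close>
          by (simp add: y_def)
      qed (use n in simp)
      then show False using net[of n] n by simp
    qed
  qed
  then show ?thesis
    using left[of k] right[of k] by (cases "k < 0") (auto simp: g_def y_def)
qed

section \<open>Tuning the spacing of the tail\<close>

definition solution :: "int \<Rightarrow> real \<Rightarrow> int \<Rightarrow> real" where
  "solution n d = (SOME w. balanced n d w)"

lemma balanced_solution: "1 \<le> n \<Longrightarrow> 0 < d \<Longrightarrow> balanced n d (solution n d)"
  unfolding solution_def using balanced_exists by (rule someI_ex)

lemma solution_mono:
  "1 \<le> n \<Longrightarrow> 0 < d \<Longrightarrow> d \<le> d' \<Longrightarrow> 1 \<le> i \<Longrightarrow> i \<le> n \<Longrightarrow>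
    solution n d i \<le> solution n d' i"
  using subsolution_le_supersolution balanced_solution unfolding balanced_def
  by (meson order.strict_trans2)

definition force_at_origin :: "int \<Rightarrow> real \<Rightarrow> real" where
  "force_at_origin n d = net_force (trial_config n d (solution n d)) 0"

lemma force_at_origin_mono:
  assumes n: "1 \<le> n" and d: "0 < d" "d \<le> d'"
  shows "force_at_origin n d \<le> force_at_origin n d'"
  unfolding force_at_origin_def
proof (rule net_force_le_of_max)
  show "trial_config n d (solution n d) k - trial_config n d' (solution n d') k
      \<le> trial_config n d (solution n d) 0 - trial_config n d' (solution n d') 0" for k
    using solution_mono[OF n d] n
    by (intro trial_config_diff_le[OF n d(2)]) (auto simp: trial_config_left)
qed (use n d spreading_trial_config in auto)

lemma force_at_origin_neg:
  assumes n: "1 \<le> n" and d: "0 < d" "d < gap_min"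
  shows "force_at_origin n d < 0"
proof (rule ccontr)
  assume "\<not> ?thesis"
  then have "gap_min \<le> trial_config n d (solution n d) (n + 1) - trial_config n d (solution n d) n"
    by (intro balanced_gaps_ge[OF n d(1) balanced_solution[OF n d(1)]]) (simp add: force_at_origin_def)
  with d show False by (simp add: trial_config_gap_right[OF n order_refl])
qed

lemma force_at_origin_pos:
  assumes n: "1 \<le> n" and d: "gap_max < d"
  shows "0 < force_at_origin n d"
proof (rule ccontr)
  have d0: "0 < d" using d gap_min_pos gap_min_less_gap_max by linarith
  assume "\<not> ?thesis"
  then have "trial_config n d (solution n d) (n + 1) - trial_config n d (solution n d) n \<le> gap_max"
    by (intro balanced_gaps_le[OF n d0 balanced_solution[OF n d0]]) (simp add: force_at_origin_def)
  with d show False by (simp add: trial_config_gap_right[OF n order_refl])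
qed

lemma balanced_limit:
  assumes n: "1 \<le> n" and a: "0 < a" "\<And>k. a \<le> dk k" and d: "dk \<longlonglongrightarrow> dl"
    and bal: "\<And>k. balanced n (dk k) (v k)"
    and K: "\<And>k j. 1 \<le> j \<Longrightarrow> j \<le> n \<Longrightarrow> \<bar>v k j\<bar> \<le> K"
    and v: "\<And>j. (\<lambda>k. v k j) \<longlonglongrightarrow> u j"
  shows "balanced n dl u"
proof -
  have "net_force (trial_config n dl u) i = 0" if "1 \<le> i" "i \<le> n" for i
  proof -
    have "(\<lambda>k. net_force (trial_config n (dk k) (v k)) i) \<longlonglongrightarrow> net_force (trial_config n dl u) i"
      by (rule tendsto_net_force_trial_config[OF n a d K v])
    moreover have "net_force (trial_config n (dk k) (v k)) i = 0" for k
      by (rule balanced_net_force[OF bal that])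
    ultimately show ?thesis by (simp add: LIMSEQ_const_iff)
  qed
  then show ?thesis by (simp add: balanced_def subsolution_def supersolution_def)
qed

lemma solution_monoseq:
  assumes n: "1 \<le> n" and mono: "monoseq dk" and d: "dk \<longlonglongrightarrow> dl" and dl: "0 < dl"
    and pos: "\<And>k. 0 < dk k" and i: "1 \<le> i" "i \<le> n"
  shows "convergent (\<lambda>k. solution n (dk k) i)"
    and "\<bar>solution n (dk k) i\<bar> \<le> \<bar>solution n (dk 0) i\<bar> + \<bar>solution n dl i\<bar>"
proof -
  define s where "s k = solution n (dk k) i" for k
  have "monoseq s \<and> (\<forall>k. \<bar>s k\<bar> \<le> \<bar>s 0\<bar> + \<bar>solution n dl i\<bar>)"
  proof (cases "incseq dk")
    case True
    then have "incseq s" and "s 0 \<le> s k" "s k \<le> solution n dl i" for k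
      using solution_mono[OF n pos _ i] incseq_le[OF True d]
      by (auto simp: s_def incseq_def)
    moreover have "\<bar>s k\<bar> \<le> \<bar>s 0\<bar> + \<bar>solution n dl i\<bar>" for k
      using calculation(2,3)[of k] by arith
    ultimately show ?thesis by (simp add: monoseq_iff)
  next
    case False
    with mono have dec: "decseq dk" by (simp add: monoseq_iff)
    then have "decseq s" and "s k \<le> s 0" "solution n dl i \<le> s k" for k
      using solution_mono[OF n pos _ i] solution_mono[OF n dl _ i] decseq_ge[OF dec d]
      by (auto simp: s_def decseq_def)
    moreover have "\<bar>s k\<bar> \<le> \<bar>s 0\<bar> + \<bar>solution n dl i\<bar>" for k
      using calculation(2,3)[of k] by arith
    ultimately show ?thesis by (simp add: monoseq_iff)
  qed
  then show "convergent (\<lambda>k. solution n (dk k) i)"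
    and "\<bar>solution n (dk k) i\<bar> \<le> \<bar>solution n (dk 0) i\<bar> + \<bar>solution n dl i\<bar>"
    unfolding s_def[symmetric] by (auto intro!: Bseq_monoseq_convergent BseqI')
qed

lemma tendsto_force_at_origin:
  assumes n: "1 \<le> n" and mono: "monoseq dk" and d: "dk \<longlonglongrightarrow> dl" and dl: "0 < dl"
    and pos: "\<And>k. 0 < dk k"
  shows "(\<lambda>k. force_at_origin n (dk k)) \<longlonglongrightarrow> force_at_origin n dl"
proof -
  define v where "v k j = (if 1 \<le> j \<and> j \<le> n then solution n (dk k) j else 0)" for k j
  define u where "u j = lim (\<lambda>k. v k j)" for j
  have v: "(\<lambda>k. v k j) \<longlonglongrightarrow> u j" for j
    using solution_monoseq(1)[OF n mono d dl pos]
    by (cases "1 \<le> j \<and> j \<le> n") (auto simp: u_def v_def convergent_LIMSEQ_iff[symmetric] convergent_const)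
  define K where "K = (\<Sum>j=1..n. \<bar>solution n (dk 0) j\<bar> + \<bar>solution n dl j\<bar>)"
  have K: "\<bar>v k j\<bar> \<le> K" if "1 \<le> j" "j \<le> n" for k j
    using solution_monoseq(2)[OF n mono d dl pos that, of k] that
      member_le_sum[of j "{1..n}" "\<lambda>j. \<bar>solution n (dk 0) j\<bar> + \<bar>solution n dl j\<bar>"]
    by (auto simp: K_def v_def)
  have a: "min (dk 0) dl \<le> dk k" for k
    using mono incseq_le[OF _ d] decseq_ge[OF _ d]
    by (auto simp: monoseq_iff incseq_def min.coboundedI1 min.coboundedI2)
  have a_pos: "0 < min (dk 0) dl" using pos dl by simp
  have conf: "trial_config n (dk k) (v k) = trial_config n (dk k) (solution n (dk k))" for k
    by (rule trial_config_cong[OF _ n]) (simp add: v_def)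
  have "balanced n (dk k) (v k)" for k
    using balanced_solution[OF n pos, of k] by (simp add: balanced_def subsolution_def supersolution_def conf)
  then have "balanced n dl u"
    using K by (rule balanced_limit[OF n a_pos a d _ _ v])
  then have "trial_config n dl u = trial_config n dl (solution n dl)"
    using balanced_unique[OF n dl _ balanced_solution[OF n dl]] by (intro trial_config_cong[OF _ n]) auto
  moreover have "(\<lambda>k. net_force (trial_config n (dk k) (v k)) 0) \<longlonglongrightarrow> net_force (trial_config n dl u) 0"
    using K by (rule tendsto_net_force_trial_config[OF n a_pos a d _ v])
  ultimately show ?thesis
    unfolding force_at_origin_def conf by simp
qed

lemma finite_equilibrium:
  assumes n: "1 \<le> n"
  obtains y where "\<And>k. k \<le> 0 \<Longrightarrow> y k = x k"
    and "\<And>k. gap_min \<le> y (k + 1) - y k" "\<And>k. y (k + 1) - y k \<le> gap_max"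
    and "\<And>i. 0 \<le> i \<Longrightarrow> i \<le> n \<Longrightarrow> net_force y i = 0"
proof -
  obtain d where d: "0 < d" "force_at_origin n d = 0"
  proof (rule monotone_zero_crossing[of "force_at_origin n"])
    show "force_at_origin n d \<le> force_at_origin n d'" if "0 < d" "d \<le> d'" for d d'
      using force_at_origin_mono[OF n that] .
    show "(\<lambda>k. force_at_origin n (dk k)) \<longlonglongrightarrow> force_at_origin n dl"
      if "monoseq dk" "dk \<longlonglongrightarrow> dl" "0 < dl" "\<And>k. 0 < dk k" for dk dl
      using tendsto_force_at_origin[OF n that] .
    show "force_at_origin n (gap_min / 2) \<le> 0"
      using force_at_origin_neg[OF n, of "gap_min / 2"] gap_min_pos by simp
    show "0 < force_at_origin n d" if "gap_max < d" for d
      using force_at_origin_pos[OF n that] .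
  qed (use gap_min_pos in auto)
  define y where "y = trial_config n d (solution n d)"
  note bal = balanced_solution[OF n d(1)]
  show ?thesis
  proof (rule that)
    show "y k = x k" if "k \<le> 0" for k
      using that by (simp add: y_def trial_config_left)
    show "gap_min \<le> y (k + 1) - y k" "y (k + 1) - y k \<le> gap_max" for k
      unfolding y_def using balanced_gaps_ge[OF n d(1) bal] balanced_gaps_le[OF n d(1) bal] d(2)
      by (simp_all add: force_at_origin_def)
    show "net_force y i = 0" if "0 \<le> i" "i \<le> n" for i
      using d(2) balanced_net_force[OF bal, of i] that
      by (cases "i = 0") (auto simp: y_def force_at_origin_def)
  qed
qed

section \<open>Infinitely many particles\<close>

lemma abs_le_of_gap_bounds:
  assumes left: "\<And>k. k \<le> 0 \<Longrightarrow> y k = x k"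
    and gaps: "\<And>k. gap_min \<le> y (k + 1) - y k \<and> y (k + 1) - y k \<le> gap_max"
  shows "\<bar>y j\<bar> \<le> \<bar>x j\<bar> + \<bar>x 0\<bar> + gap_max * \<bar>of_int j\<bar>"
proof (cases "j \<le> 0")
  case True
  have "0 \<le> gap_max * \<bar>of_int j\<bar>"
    using gap_min_pos gap_min_less_gap_max by simp
  then show ?thesis using left[OF True] abs_ge_zero[of "x 0"] by linarith
next
  case False
  have "gap_min * of_int (j - 0) \<le> y j - y 0"
    using False by (intro diff_ge_of_gaps_ge) (use gaps[of "_ - 1"] in auto)
  moreover have "y j - y 0 \<le> gap_max * of_int (j - 0)"
    using False by (intro diff_le_of_gaps_le) (use gaps[of "_ - 1"] in auto)
  moreover have "0 \<le> gap_min * of_int j" "\<bar>of_int j\<bar> = (of_int j :: real)"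
    using False gap_min_pos by simp_all
  ultimately show ?thesis
    using left[of 0] by simp
qed

lemma equilibrium_limit:
  obtains y where "\<And>k. k \<le> 0 \<Longrightarrow> y k = x k"
    and "\<And>k. gap_min \<le> y (k + 1) - y k" "\<And>k. y (k + 1) - y k \<le> gap_max"
    and "\<And>i. 0 \<le> i \<Longrightarrow> net_force y i = 0"
proof -
  have "\<exists>y. (\<forall>k\<le>0. y k = x k) \<and> (\<forall>k. gap_min \<le> y (k + 1) - y k \<and> y (k + 1) - y k \<le> gap_max)
          \<and> (\<forall>i. 0 \<le> i \<and> i \<le> int m + 1 \<longrightarrow> net_force y i = 0)" for m :: nat
    by (rule finite_equilibrium[of "int m + 1"]) (simp, blast)
  then obtain Y where Y_left: "\<And>m k. k \<le> 0 \<Longrightarrow> Y m k = x k"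
    and Y_gaps: "\<And>m k. gap_min \<le> Y m (k + 1) - Y m k \<and> Y m (k + 1) - Y m k \<le> gap_max"
    and Y_net: "\<And>m i. 0 \<le> i \<Longrightarrow> i \<le> int m + 1 \<Longrightarrow> net_force (Y m) i = 0"
    by metis
  have "\<bar>Y m j\<bar> \<le> \<bar>x j\<bar> + \<bar>x 0\<bar> + gap_max * \<bar>of_int j\<bar>" for m j
    using Y_left Y_gaps by (rule abs_le_of_gap_bounds)
  then have bounded: "bounded (range (\<lambda>m. Y m j))" for j
    by (intro boundedI[of _ "\<bar>x j\<bar> + \<bar>x 0\<bar> + gap_max * \<bar>of_int j\<bar>"]) auto
  obtain r where r: "strict_mono r" and conv: "\<And>j. convergent (\<lambda>m. Y (r m) j)"
    using pointwise_convergent_subseq[of Y, OF bounded] by blast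
  define y where "y j = lim (\<lambda>m. Y (r m) j)" for j
  have lim: "(\<lambda>m. Y (r m) j) \<longlonglongrightarrow> y j" for j
    using conv by (simp add: y_def convergent_LIMSEQ_iff)
  have gap_lim: "(\<lambda>m. Y (r m) (k + 1) - Y (r m) k) \<longlonglongrightarrow> y (k + 1) - y k" for k
    by (intro tendsto_intros lim)
  show ?thesis
  proof (rule that)
    show "y k = x k" if "k \<le> 0" for k
      using lim[of k] Y_left[OF that] by (simp add: LIMSEQ_const_iff)
    show "gap_min \<le> y (k + 1) - y k" for k
      using Y_gaps by (intro LIMSEQ_le_const[OF gap_lim]) auto
    show "y (k + 1) - y k \<le> gap_max" for k
      using Y_gaps by (intro LIMSEQ_le_const2[OF gap_lim]) auto
  next
    fix i :: int assume i: "0 \<le> i"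
    have "(\<lambda>m. net_force (Y (r m)) i) \<longlonglongrightarrow> net_force y i"
      using gap_min_pos Y_gaps by (intro tendsto_net_force[OF _ spread_at_of_gaps lim]) auto
    moreover have "net_force (Y (r m)) i = 0" if "nat i \<le> m" for m
      using Y_net[of i "r m"] seq_suble[OF r, of m] that i by linarith
    then have "(\<lambda>m. net_force (Y (r m)) i) \<longlonglongrightarrow> 0"
      by (intro tendsto_eventually) (auto simp: eventually_sequentially)
    ultimately show "net_force y i = 0"
      by (rule LIMSEQ_unique)
  qed
qed

end

theorem mainTheorem8:
  fixes F :: "real \<Rightarrow> real" and x :: "int \<Rightarrow> real" and b B :: real
  assumes Fpos: "\<And>t. 0 < t \<Longrightarrow> 0 < F t"
    and Fdec: "\<And>s t. 0 < s \<Longrightarrow> s < t \<Longrightarrow> F t < F s"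
    and Fcont: "continuous_on {0<..} F"
    and Fint: "F integrable_on {1..}"
    and bB: "0 < b" "b < B"
    and xneg: "x (-1) < 0"
    and gaps: "\<And>i::int. i \<ge> 1 \<Longrightarrow> b \<le> x (-i) - x (-i-1) \<and> x (-i) - x (-i-1) \<le> B"
    and x0: "x 0 > x (-1)"
  shows "\<exists>y :: int \<Rightarrow> real.
           (\<forall>n\<le>0. y n = x n) \<and>
           (\<forall>i\<ge>0. y i < y (i+1)) \<and>
           (\<forall>i\<ge>0. in_equilibrium F y i) \<and>
           (\<forall>i\<ge>0. min b (x 0 - x (-1)) \<le> y (i+1) - y i \<and>
                   y (i+1) - y i \<le> max B (x 0 - x (-1)))"
proof -
  interpret half_chain F x b B
    using assms by unfold_locales auto
  obtain y where left: "\<And>k. k \<le> 0 \<Longrightarrow> y k = x k"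
    and gap_ge: "\<And>k. gap_min \<le> y (k + 1) - y k" and gap_le: "\<And>k. y (k + 1) - y k \<le> gap_max"
    and net: "\<And>i. 0 \<le> i \<Longrightarrow> net_force y i = 0"
    using equilibrium_limit by blast
  show ?thesis
  proof (intro exI[of _ y] conjI allI impI)
    fix i :: int assume "0 \<le> i"
    show "y i < y (i + 1)" using gap_ge[of i] gap_min_pos by simp
    show "in_equilibrium F y i"
      using gap_min_pos by (intro in_equilibrium_of_net_force[OF gap_ge _ net[OF \<open>0 \<le> i\<close>]]) simp
    show "min b (x 0 - x (-1)) \<le> y (i + 1) - y i" "y (i + 1) - y i \<le> max B (x 0 - x (-1))"
      using gap_ge[of i] gap_le[of i] by (simp_all add: gap_min_def gap_max_def)
  qed (use left in auto)
qed

end
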